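(* For any path $\omega\in\Omega$ that is wCH-random for a computable precise temporal forecasting system $\varphi$: $\big[\liminf_{n\to\infty}\varphi(\omega_{1:n}),\ \limsup_{n\to\infty}\varphi(\omega_{1:n})\big]\subseteq I_\textnormal{wCH}(\omega).$
   Context: $\mathcal{X}=\{0,1\}$; $\Omega=\mathcal{X}^{\mathbb{N}}$ (paths); $\mathbb{S}=\bigcup_{n\ge0}\mathcal X^n$ (situations), $|s|$ length, $\omega_{1:n}=(\omega_1,\dots,\omega_n)$, $\omega_{1:0}$ the empty string. $\mathcal{I}$: nonempty closed intervals $I\subseteq[0,1]$. A forecasting system is $\varphi:\mathbb S\to\mathcal I$, $\underline\varphi=\min\varphi$, $\overline\varphi=\max\varphi$; precise if $\underline\varphi=\overline\varphi$ (then $\varphi(s)$ is identified with the number $\underline\varphi(s)$); temporal if $\varphi(s)=\varphi(t)$ whenever $|s|=|t|$; an interval forecast $I$ is identified with the constant forecasting system $s\mapsto I$. $\varphi$ is computable if there are recursive $\underline q,\overline q:\mathbb S\times\mathbb N_0\to\mathbb Q$ with $|\underline\varphi(s)-\underline q(s,n)|<2^{-n}$ and $|\overline\varphi(s)-\overline q(s,n)|<2^{-n}$. A path $\omega$ is wCH-random for $\varphi$ if for every recursive temporal selection process $S:\mathbb S\to\{0,1\}$ (i.e. $S(s)$ depends only on $|s|$) with $\sum_{k=0}^{n-1}S(\omega_{1:k})\to\infty$: $\liminf_n \frac{\sum_{k<n}S(\omega_{1:k})[\omega_{k+1}-\underline\varphi(\omega_{1:k})]}{\sum_{k<n}S(\omega_{1:k})}\ge0$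 and $\limsup_n \frac{\sum_{k<n}S(\omega_{1:k})[\omega_{k+1}-\overline\varphi(\omega_{1:k})]}{\sum_{k<n}S(\omega_{1:k})}\le0$. $\mathcal I_\textnormal{wCH}(\omega)=\{I\in\mathcal I:\omega\text{ wCH-random for }I\}$, $I_\textnormal{wCH}(\omega)=\bigcap_{I\in\mathcal I_\textnormal{wCH}(\omega)}I$. *)

theory Defs
  imports "HOL-Analysis.Analysis"
begin

primrec prim_rec :: "(nat list \<Rightarrow> nat) \<Rightarrow> (nat list \<Rightarrow> nat) \<Rightarrow> nat \<Rightarrow> nat list \<Rightarrow> nat" where
  "prim_rec g h 0 ys = g ys"
| "prim_rec g h (Suc k) ys = h (k # prim_rec g h k ys # ys)"

text \<open>recfn n f: f is a total recursive function of arity n (only its values on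
  argument lists of length n matter).\<close>
inductive recfn :: "nat \<Rightarrow> (nat list \<Rightarrow> nat) \<Rightarrow> bool" where
  rf_zero: "recfn n (\<lambda>_. 0)"
| rf_succ: "recfn 1 (\<lambda>xs. Suc (hd xs))"
| rf_proj: "i < n \<Longrightarrow> recfn n (\<lambda>xs. xs ! i)"
| rf_comp: "recfn m g \<Longrightarrow> length fs = m \<Longrightarrow> (\<forall>f\<in>set fs. recfn n f)
            \<Longrightarrow> recfn n (\<lambda>xs. g (map (\<lambda>f. f xs) fs))"
| rf_prim: "recfn n g \<Longrightarrow> recfn (Suc (Suc n)) h
            \<Longrightarrow> recfn (Suc n) (\<lambda>xs. prim_rec g h (hd xs) (tl xs))"
| rf_mu: "recfn (Suc n) f \<Longrightarrow> (\<forall>ys. length ys = n \<longrightarrow> (\<exists>k. f (k # ys) = 0))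
            \<Longrightarrow> recfn n (\<lambda>ys. LEAST k. f (k # ys) = 0)"

text \<open>X = {0,1} is modelled by bool (with of_bool giving 0/1); a path is
  omega :: nat \<Rightarrow> bool where omega k is the (k+1)-th outcome; situations are bool lists.\<close>

definition prefix :: "(nat \<Rightarrow> bool) \<Rightarrow> nat \<Rightarrow> bool list" where
  "prefix \<omega> n = map \<omega> [0..<n]"

primrec sit_code :: "bool list \<Rightarrow> nat" where
  "sit_code [] = 1"
| "sit_code (b # s) = 2 * sit_code s + of_bool b"

text \<open>An interval forecast [a,b] \<subseteq> [0,1] is represented by the pair (a,b).\<close>
type_synonym interval = "real \<times> real"

definition is_interval :: "interval \<Rightarrow> bool" where
  "is_interval I \<longleftrightarrow> 0 \<le> fst I \<and> fst I \<le> snd I \<and> snd I \<le> 1"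

definition forecasting_system :: "(bool list \<Rightarrow> interval) \<Rightarrow> bool" where
  "forecasting_system \<phi> \<longleftrightarrow> (\<forall>s. is_interval (\<phi> s))"

definition lower :: "(bool list \<Rightarrow> interval) \<Rightarrow> bool list \<Rightarrow> real" where
  "lower \<phi> s = fst (\<phi> s)"

definition upper :: "(bool list \<Rightarrow> interval) \<Rightarrow> bool list \<Rightarrow> real" where
  "upper \<phi> s = snd (\<phi> s)"

definition precise :: "(bool list \<Rightarrow> interval) \<Rightarrow> bool" where
  "precise \<phi> \<longleftrightarrow> (\<forall>s. lower \<phi> s = upper \<phi> s)"

definition temporal :: "(bool list \<Rightarrow> interval) \<Rightarrow> bool" where
  "temporal \<phi> \<longleftrightarrow> (\<forall>s t. length s = length t \<longrightarrow> \<phi> s = \<phi> t)"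

definition recursive_rat_approx :: "(bool list \<Rightarrow> real) \<Rightarrow> bool" where
  "recursive_rat_approx f \<longleftrightarrow>
     (\<exists>A B C. recfn 2 A \<and> recfn 2 B \<and> recfn 2 C \<and>
        (\<forall>s n. \<bar>f s - (real (A [sit_code s, n]) - real (B [sit_code s, n]))
                       / (real (C [sit_code s, n]) + 1)\<bar> < (1/2) ^ n))"

definition computable_fs :: "(bool list \<Rightarrow> interval) \<Rightarrow> bool" where
  "computable_fs \<phi> \<longleftrightarrow> recursive_rat_approx (lower \<phi>) \<and> recursive_rat_approx (upper \<phi>)"

text \<open>A temporal selection process S(s) depends only on |s|, so it is given by
  a function Sel :: nat \<Rightarrow> bool with S(s) = Sel |s|; it is recursive iff Sel is.\<close>
definition recursive_temporal_selection :: "(nat \<Rightarrow> bool) \<Rightarrow> bool" where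
  "recursive_temporal_selection Sel \<longleftrightarrow> (\<exists>f. recfn 1 f \<and> (\<forall>k. f [k] = of_bool (Sel k)))"

definition sel_count :: "(nat \<Rightarrow> bool) \<Rightarrow> nat \<Rightarrow> real" where
  "sel_count Sel n = (\<Sum>k<n. of_bool (Sel k))"

definition wCH_random :: "(bool list \<Rightarrow> interval) \<Rightarrow> (nat \<Rightarrow> bool) \<Rightarrow> bool" where
  "wCH_random \<phi> \<omega> \<longleftrightarrow>
     (\<forall>Sel. recursive_temporal_selection Sel \<and> filterlim (sel_count Sel) at_top sequentially \<longrightarrow>
        liminf (\<lambda>n. ereal ((\<Sum>k<n. of_bool (Sel k) * (of_bool (\<omega> k) - lower \<phi> (prefix \<omega> k)))
                          / sel_count Sel n)) \<ge> 0 \<and>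
        limsup (\<lambda>n. ereal ((\<Sum>k<n. of_bool (Sel k) * (of_bool (\<omega> k) - upper \<phi> (prefix \<omega> k)))
                          / sel_count Sel n)) \<le> 0)"

definition I_wCH_family :: "(nat \<Rightarrow> bool) \<Rightarrow> interval set" where
  "I_wCH_family \<omega> = {I. is_interval I \<and> wCH_random (\<lambda>_. I) \<omega>}"

definition I_wCH :: "(nat \<Rightarrow> bool) \<Rightarrow> real set" where
  "I_wCH \<omega> = (\<Inter>I\<in>I_wCH_family \<omega>. {fst I..snd I})"

end

theory Submission
  imports Defs
begin

text \<open>
  Let \<open>f k\<close> be the forecast along \<open>\<omega>\<close> at time \<open>k\<close>, and suppose \<open>liminf f < t < a\<close> for an
  interval \<open>[a, b]\<close> for which \<open>\<omega>\<close> is wCH-random. Since \<open>\<phi>\<close> is temporal, \<open>f k\<close> is the forecast in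
  the all-zero situation of length \<open>k\<close>, so it has rational approximations computable from \<open>k\<close>
  alone. Comparing a \<open>2^-m\<close>-approximation with a rational threshold between \<open>liminf f\<close> and \<open>t\<close>
  gives a recursive temporal selection that selects infinitely often and only at times where
  \<open>f k < t\<close>. Along it, randomness for \<open>\<phi>\<close> makes the averages of \<open>\<omega>\<^sub>k - f k\<close> asymptotically
  \<open>\<le> 0\<close>, randomness for \<open>[a, b]\<close> makes those of \<open>\<omega>\<^sub>k - a\<close> asymptotically \<open>\<ge> 0\<close>, yet the
  former exceed the latter by at least \<open>a - t > 0\<close>. The bound \<open>limsup f \<le> b\<close> is symmetric.
\<close>

section \<open>Total recursive functions\<close>

text \<open>\<open>recfn\<close> characterises functions intensionally; \<open>total_recursive\<close> closes it under
  extensional equality on argument lists of the right length.\<close>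

definition total_recursive :: "nat \<Rightarrow> (nat list \<Rightarrow> nat) \<Rightarrow> bool" where
  "total_recursive n g \<longleftrightarrow> (\<exists>f. recfn n f \<and> (\<forall>xs. length xs = n \<longrightarrow> f xs = g xs))"

lemma total_recursive_recfn: "recfn n f \<Longrightarrow> total_recursive n f"
  unfolding total_recursive_def by blast

lemma total_recursive_cong:
  "total_recursive n g \<Longrightarrow> (\<And>xs. length xs = n \<Longrightarrow> g xs = g' xs) \<Longrightarrow> total_recursive n g'"
  unfolding total_recursive_def by metis

lemma total_recursive_proj: "i < n \<Longrightarrow> total_recursive n (\<lambda>xs. xs ! i)"
  by (rule total_recursive_recfn, rule rf_proj)

lemma total_recursive_comp:
  assumes g: "total_recursive m g" and len: "length hs = m"
    and hs: "\<forall>h\<in>set hs. total_recursive n h"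
  shows "total_recursive n (\<lambda>xs. g (map (\<lambda>h. h xs) hs))"
proof -
  obtain fg where fg: "recfn m fg" "\<And>xs. length xs = m \<Longrightarrow> fg xs = g xs"
    using g unfolding total_recursive_def by blast
  obtain F where F: "\<forall>h\<in>set hs. recfn n (F h) \<and> (\<forall>xs. length xs = n \<longrightarrow> F h xs = h xs)"
    using bchoice[OF hs[unfolded total_recursive_def]] by blast
  have "recfn n (\<lambda>xs. fg (map (\<lambda>f. f xs) (map F hs)))"
    by (rule rf_comp[OF fg(1)]) (use F len in auto)
  moreover have "fg (map (\<lambda>f. f xs) (map F hs)) = g (map (\<lambda>h. h xs) hs)" if "length xs = n" for xs
    using F that len by (simp add: fg(2) cong: map_cong)
  ultimately show ?thesis
    unfolding total_recursive_def by auto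
qed

lemma total_recursive_comp1:
  "total_recursive 1 g \<Longrightarrow> total_recursive n h \<Longrightarrow> total_recursive n (\<lambda>xs. g [h xs])"
  using total_recursive_comp[of 1 g "[h]" n] by simp

lemma total_recursive_comp2:
  "total_recursive 2 g \<Longrightarrow> total_recursive n h1 \<Longrightarrow> total_recursive n h2
    \<Longrightarrow> total_recursive n (\<lambda>xs. g [h1 xs, h2 xs])"
  using total_recursive_comp[of 2 g "[h1, h2]" n] by simp

lemma total_recursive_Suc: "total_recursive 1 (\<lambda>xs. Suc (xs ! 0))"
  by (rule total_recursive_cong[OF total_recursive_recfn[OF rf_succ]]) (auto simp: length_Suc_conv)

lemma total_recursive_const: "total_recursive n (\<lambda>_. c)"
proof (induction c)
  case 0
  show ?case by (rule total_recursive_recfn, rule rf_zero)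
next
  case (Suc c)
  show ?case
    using total_recursive_comp1[OF total_recursive_Suc Suc.IH] by simp
qed

lemma total_recursive_prim_rec:
  assumes g: "total_recursive n g" and h: "total_recursive (n + 2) h"
    and eq: "\<And>x ys. length ys = n \<Longrightarrow> prim_rec g h x ys = F (x # ys)"
  shows "total_recursive (n + 1) F"
proof -
  obtain fg where fg: "recfn n fg" "\<And>xs. length xs = n \<Longrightarrow> fg xs = g xs"
    using g unfolding total_recursive_def by blast
  obtain fh where fh: "recfn (Suc (Suc n)) fh" "\<And>xs. length xs = Suc (Suc n) \<Longrightarrow> fh xs = h xs"
    using h unfolding total_recursive_def by auto
  have "prim_rec fg fh x ys = prim_rec g h x ys" if "length ys = n" for x ys
    using that by (induction x) (simp_all add: fg fh)
  then have "prim_rec fg fh (hd xs) (tl xs) = F xs" if "length xs = Suc n" for xs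
    using that eq by (cases xs) auto
  with rf_prim[OF fg(1) fh(1)] show ?thesis
    unfolding total_recursive_def Suc_eq_plus1 by blast
qed

lemma total_recursive_plus: "total_recursive 2 (\<lambda>xs. xs ! 0 + xs ! 1)"
proof (rule total_recursive_prim_rec[of 1, unfolded one_add_one])
  show "prim_rec (\<lambda>ys. ys ! 0) (\<lambda>zs. Suc (zs ! 1)) x ys = (x # ys) ! 0 + (x # ys) ! 1" for x ys
    by (induction x) simp_all
qed (use total_recursive_comp1[OF total_recursive_Suc] in \<open>simp_all add: total_recursive_proj\<close>)

lemma total_recursive_add:
  "total_recursive n f \<Longrightarrow> total_recursive n g \<Longrightarrow> total_recursive n (\<lambda>xs. f xs + g xs)"
  using total_recursive_comp2[OF total_recursive_plus] by simp

lemma total_recursive_times: "total_recursive 2 (\<lambda>xs. xs ! 0 * xs ! 1)"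
proof (rule total_recursive_prim_rec[of 1, unfolded one_add_one])
  show "prim_rec (\<lambda>_. 0) (\<lambda>zs. zs ! 2 + zs ! 1) x ys = (x # ys) ! 0 * (x # ys) ! 1" for x ys
    by (induction x) (simp_all add: numeral_2_eq_2)
qed (simp_all add: total_recursive_add total_recursive_proj total_recursive_const)

lemma total_recursive_mult:
  "total_recursive n f \<Longrightarrow> total_recursive n g \<Longrightarrow> total_recursive n (\<lambda>xs. f xs * g xs)"
  using total_recursive_comp2[OF total_recursive_times] by simp

lemma total_recursive_power: "total_recursive 1 (\<lambda>xs. c ^ (xs ! 0))"
proof (rule total_recursive_prim_rec[of 0, unfolded add_0])
  show "prim_rec (\<lambda>_. 1) (\<lambda>zs. c * zs ! 1) x ys = c ^ ((x # ys) ! 0)" for x ys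
    by (induction x) simp_all
qed (simp_all add: total_recursive_mult total_recursive_proj total_recursive_const)

lemma total_recursive_pred: "total_recursive 1 (\<lambda>xs. xs ! 0 - 1)"
proof (rule total_recursive_prim_rec[of 0, unfolded add_0])
  show "prim_rec (\<lambda>_. 0) (\<lambda>zs. zs ! 0) x ys = (x # ys) ! 0 - 1" for x ys
    by (induction x) simp_all
qed (simp_all add: total_recursive_proj total_recursive_const)

lemma total_recursive_diff:
  assumes "total_recursive n f" "total_recursive n g"
  shows "total_recursive n (\<lambda>xs. f xs - g xs)"
proof -
  have "total_recursive 2 (\<lambda>xs. xs ! 1 - xs ! 0)"
  proof (rule total_recursive_prim_rec[of 1, unfolded one_add_one])
    show "prim_rec (\<lambda>ys. ys ! 0) (\<lambda>zs. zs ! 1 - 1) x ys = (x # ys) ! 1 - (x # ys) ! 0" for x ys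
      by (induction x) simp_all
  qed (use total_recursive_comp1[OF total_recursive_pred] in \<open>simp_all add: total_recursive_proj\<close>)
  from total_recursive_comp2[OF this assms(2,1)] show ?thesis
    by simp
qed

lemma total_recursive_pos_indicator: "total_recursive 1 (\<lambda>xs. of_bool (0 < xs ! 0))"
proof (rule total_recursive_prim_rec[of 0, unfolded add_0])
  show "prim_rec (\<lambda>_. 0) (\<lambda>_. 1) x ys = of_bool (0 < (x # ys) ! 0)" for x ys
    by (cases x) simp_all
qed (simp_all add: total_recursive_const)

lemma recursive_temporal_selection_less:
  assumes "total_recursive 1 E1" "total_recursive 1 E2"
  shows "recursive_temporal_selection (\<lambda>k. E1 [k] < E2 [k])"
proof -
  have "total_recursive 1 (\<lambda>xs. of_bool (0 < E2 xs - E1 xs))"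
    using total_recursive_comp1[OF total_recursive_pos_indicator total_recursive_diff[OF assms(2,1)]] by simp
  then obtain f where "recfn 1 f" "\<And>xs. length xs = 1 \<Longrightarrow> f xs = of_bool (E1 xs < E2 xs)"
    unfolding total_recursive_def by auto
  then show ?thesis
    unfolding recursive_temporal_selection_def by (intro exI[of _ f]) auto
qed

section \<open>Recursive approximation of temporal forecasts\<close>

lemma nat_diff_div_less_iff:
  fixes a b c p p' d :: nat
  assumes "0 < c" "0 < d"
  shows "(real a - real b) / real c < (real p - real p') / real d \<longleftrightarrow> d * a + c * p' < c * p + d * b"
proof -
  have "0 < real c" "0 < real d"
    using assms by simp_all
  then have "(real a - real b) / real c < (real p - real p') / real d
        \<longleftrightarrow> (real a - real b) * real d < (real p - real p') * real c"
    by (simp add: field_simps)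
  also have "\<dots> \<longleftrightarrow> real (d * a + c * p') < real (c * p + d * b)"
    by (simp add: algebra_simps)
  finally show ?thesis
    by (simp only: of_nat_less_iff)
qed

lemma Rats_nat_diff_divE:
  assumes "r \<in> \<rat>"
  obtains p p' d :: nat where "0 < d" "r = (real p - real p') / real d"
proof -
  obtain i j :: int where ij: "0 < j" "r = of_int i / of_int j"
    using assms by (rule Rats_cases')
  have "real_of_int i = real (nat i) - real (nat (- i))"
    by (cases "0 \<le> i") simp_all
  moreover have "real_of_int j = real (nat j)"
    using ij(1) by simp
  ultimately have "r = (real (nat i) - real (nat (- i))) / real (nat j)"
    using ij(2) by metis
  moreover have "0 < nat j"
    using ij(1) by simp
  ultimately show ?thesis
    using that by blast
qed

definition recursively_approximable :: "(nat \<Rightarrow> real) \<Rightarrow> bool" where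
  "recursively_approximable f \<longleftrightarrow>
     (\<exists>q. (\<forall>m k. \<bar>f k - q m k\<bar> < (1/2) ^ m) \<and>
          (\<forall>m r. r \<in> \<rat> \<longrightarrow> recursive_temporal_selection (\<lambda>k. q m k < r)
                           \<and> recursive_temporal_selection (\<lambda>k. r < q m k)))"

lemma sit_code_replicate_False: "sit_code (replicate k False) = 2 ^ k"
  by (induction k) simp_all

lemma recursively_approximable_along_path:
  assumes approx: "recursive_rat_approx g" and temporal: "\<And>s t. length s = length t \<Longrightarrow> g s = g t"
  shows "recursively_approximable (\<lambda>k. g (prefix \<omega> k))"
proof -
  obtain A B C where rec: "recfn 2 A" "recfn 2 B" "recfn 2 C"
    and close: "\<And>s n. \<bar>g s - (real (A [sit_code s, n]) - real (B [sit_code s, n]))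
                       / (real (C [sit_code s, n]) + 1)\<bar> < (1/2) ^ n"
    using approx unfolding recursive_rat_approx_def by blast
  define q where "q m k = (real (A [2 ^ k, m]) - real (B [2 ^ k, m])) / real (Suc (C [2 ^ k, m]))"
    for m k
  have "\<bar>g (prefix \<omega> k) - q m k\<bar> < (1/2) ^ m" for m k
    using close[of "replicate k False" m] temporal[of "prefix \<omega> k" "replicate k False"]
    by (simp add: q_def prefix_def sit_code_replicate_False add.commute)
  moreover have "recursive_temporal_selection (\<lambda>k. q m k < r)"
    and "recursive_temporal_selection (\<lambda>k. r < q m k)" if "r \<in> \<rat>" for m r
  proof -
    obtain p p' d where d: "0 < d" and r: "r = (real p - real p') / real d"
      using \<open>r \<in> \<rat>\<close> by (rule Rats_nat_diff_divE)
    have at_power: "total_recursive 1 (\<lambda>xs. F [2 ^ (xs ! 0), m])" if "recfn 2 F" for F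
      by (rule total_recursive_comp2[OF total_recursive_recfn[OF that]
            total_recursive_power total_recursive_const])
    define E1 where "E1 xs = d * A [2 ^ (xs ! 0), m] + Suc (C [2 ^ (xs ! 0), m]) * p'" for xs
    define E2 where "E2 xs = Suc (C [2 ^ (xs ! 0), m]) * p + d * B [2 ^ (xs ! 0), m]" for xs
    have E: "total_recursive 1 E1" "total_recursive 1 E2"
      unfolding E1_def E2_def using at_power rec
      by (simp_all add: total_recursive_add total_recursive_mult total_recursive_const
          total_recursive_comp1[OF total_recursive_Suc])
    have "q m k < r \<longleftrightarrow> E1 [k] < E2 [k]" "r < q m k \<longleftrightarrow> E2 [k] < E1 [k]" for k
      unfolding q_def r E1_def E2_def nth_Cons_0
      by (rule nat_diff_div_less_iff[OF zero_less_Suc d] nat_diff_div_less_iff[OF d zero_less_Suc])+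
    then show "recursive_temporal_selection (\<lambda>k. q m k < r)"
      and "recursive_temporal_selection (\<lambda>k. r < q m k)"
      using recursive_temporal_selection_less[OF E] recursive_temporal_selection_less[OF E(2,1)]
      by simp_all
  qed
  ultimately show ?thesis
    unfolding recursively_approximable_def by blast
qed

lemma recursively_approximable_lower_along_path:
  assumes "computable_fs \<phi>" "temporal \<phi>"
  shows "recursively_approximable (\<lambda>k. lower \<phi> (prefix \<omega> k))"
proof (rule recursively_approximable_along_path)
  show "recursive_rat_approx (lower \<phi>)"
    using assms(1) unfolding computable_fs_def by simp
  show "lower \<phi> s = lower \<phi> t" if "length s = length t" for s t
    using assms(2) that unfolding temporal_def lower_def by metis
qed

lemma recursively_approximable_uminus:
  assumes "recursively_approximable f"
  shows "recursively_approximable (\<lambda>k. - f k)"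
proof -
  obtain q where close: "\<And>m k. \<bar>f k - q m k\<bar> < (1/2) ^ m"
    and rec: "\<And>m r. r \<in> \<rat> \<Longrightarrow> recursive_temporal_selection (\<lambda>k. q m k < r)
                                  \<and> recursive_temporal_selection (\<lambda>k. r < q m k)"
    using assms unfolding recursively_approximable_def by blast
  have "\<bar>- f k - - q m k\<bar> < (1/2) ^ m" for m k
    using close[of k m] by linarith
  moreover have "recursive_temporal_selection (\<lambda>k. - q m k < r)
               \<and> recursive_temporal_selection (\<lambda>k. r < - q m k)" if "r \<in> \<rat>" for m r
  proof -
    have "(\<lambda>k. - q m k < r) = (\<lambda>k. - r < q m k)" "(\<lambda>k. r < - q m k) = (\<lambda>k. q m k < - r)"
      by auto
    then show ?thesis
      using rec[of "- r" m] that by simp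
  qed
  ultimately show ?thesis
    unfolding recursively_approximable_def by (intro exI[of _ "\<lambda>m k. - q m k"]) blast
qed

lemma recursively_approximable_frequently_below:
  assumes "recursively_approximable f" "t1 < t2" "\<exists>\<^sub>F k in sequentially. f k < t1"
  obtains Sel where "recursive_temporal_selection Sel" "\<exists>\<^sub>F k in sequentially. Sel k"
    "\<And>k. Sel k \<Longrightarrow> f k < t2"
proof -
  obtain q where close: "\<And>m k. \<bar>f k - q m k\<bar> < (1/2) ^ m"
    and rec: "\<And>m r. r \<in> \<rat> \<Longrightarrow> recursive_temporal_selection (\<lambda>k. q m k < r)"
    using assms(1) unfolding recursively_approximable_def by blast
  obtain m where m: "(1/2) ^ m < (t2 - t1) / 2"
    using real_arch_pow_inv[of "(t2 - t1) / 2" "1/2"] assms(2) by auto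
  obtain r where r: "r \<in> \<rat>" "t1 + (1/2) ^ m < r" "r < t2 - (1/2) ^ m"
    using Rats_dense_in_real[of "t1 + (1/2) ^ m" "t2 - (1/2) ^ m"] m by auto
  show thesis
  proof (rule that[of "\<lambda>k. q m k < r"])
    show "recursive_temporal_selection (\<lambda>k. q m k < r)"
      using rec r(1) .
    show "\<exists>\<^sub>F k in sequentially. q m k < r"
      using assms(3)
    proof (rule frequently_elim1)
      show "q m k < r" if "f k < t1" for k
        using close[of k m] that r by (auto simp: abs_less_iff)
    qed
    show "f k < t2" if "q m k < r" for k
      using close[of k m] that r by (auto simp: abs_less_iff)
  qed
qed

lemma recursively_approximable_frequently_above:
  assumes "recursively_approximable f" "t2 < t1" "\<exists>\<^sub>F k in sequentially. t1 < f k"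
  obtains Sel where "recursive_temporal_selection Sel" "\<exists>\<^sub>F k in sequentially. Sel k"
    "\<And>k. Sel k \<Longrightarrow> t2 < f k"
  using recursively_approximable_frequently_below[OF recursively_approximable_uminus[OF assms(1)],
      of "- t1" "- t2"] assms(2,3)
  by auto

section \<open>Averages along selections\<close>

lemma sel_count_at_top:
  assumes "\<exists>\<^sub>F k in sequentially. Sel k"
  shows "filterlim (sel_count Sel) at_top sequentially"
proof -
  have mono: "incseq (sel_count Sel)"
    unfolding incseq_def sel_count_def by (intro allI impI sum_mono2) auto
  have unbounded: "\<exists>n. real N \<le> sel_count Sel n" for N
  proof (induction N)
    case 0
    show ?case by (auto simp: sel_count_def)
  next
    case (Suc N)
    then obtain n where n: "real N \<le> sel_count Sel n" by blast
    obtain k where k: "n \<le> k" "Sel k"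
      using assms by (auto simp: frequently_sequentially)
    have "real (Suc N) \<le> sel_count Sel (Suc k)"
      using n k monoD[OF mono k(1)] by (simp add: sel_count_def)
    then show ?case by blast
  qed
  show ?thesis
    unfolding filterlim_at_top eventually_sequentially
  proof
    fix Z :: real
    obtain N :: nat where "Z \<le> real N" using real_arch_simple by blast
    moreover obtain n where "real N \<le> sel_count Sel n" using unbounded by blast
    ultimately show "\<exists>n. \<forall>m\<ge>n. Z \<le> sel_count Sel m"
      using monoD[OF mono] by (meson order_trans)
  qed
qed

lemma wCH_random_frequent_selection:
  assumes "wCH_random \<phi> \<omega>" "recursive_temporal_selection Sel" "\<exists>\<^sub>F k in sequentially. Sel k"
  shows "0 \<le> liminf (\<lambda>n. ereal ((\<Sum>k<n. of_bool (Sel k) * (of_bool (\<omega> k) - lower \<phi> (prefix \<omega> k)))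
                                / sel_count Sel n))"
    and "limsup (\<lambda>n. ereal ((\<Sum>k<n. of_bool (Sel k) * (of_bool (\<omega> k) - upper \<phi> (prefix \<omega> k)))
                                / sel_count Sel n)) \<le> 0"
  using assms sel_count_at_top unfolding wCH_random_def by blast+

lemma no_selection_average_gap:
  fixes x a b :: "nat \<Rightarrow> real"
  assumes count: "filterlim (sel_count Sel) at_top sequentially"
    and lower: "0 \<le> liminf (\<lambda>n. ereal ((\<Sum>k<n. of_bool (Sel k) * (x k - a k)) / sel_count Sel n))"
    and upper: "limsup (\<lambda>n. ereal ((\<Sum>k<n. of_bool (Sel k) * (x k - b k)) / sel_count Sel n)) \<le> 0"
    and gap: "0 < \<delta>" "\<And>k. Sel k \<Longrightarrow> b k + \<delta> \<le> a k"
  shows False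
proof -
  define avg where "avg y n = (\<Sum>k<n. of_bool (Sel k) * y k) / sel_count Sel n" for y n
  have "ereal (- \<delta> / 2) < 0"
    using gap(1) by simp
  then have "ereal (- \<delta> / 2) < liminf (\<lambda>n. ereal (avg (\<lambda>k. x k - a k) n))"
    using lower unfolding avg_def by (rule order_less_le_trans)
  then have ev_a: "\<forall>\<^sub>F n in sequentially. - \<delta> / 2 < avg (\<lambda>k. x k - a k) n"
    by (auto dest: less_LiminfD elim: eventually_mono)
  have "0 < ereal (\<delta> / 2)"
    using gap(1) by simp
  with upper have "limsup (\<lambda>n. ereal (avg (\<lambda>k. x k - b k) n)) < ereal (\<delta> / 2)"
    unfolding avg_def by (rule order_le_less_trans)
  then have ev_b: "\<forall>\<^sub>F n in sequentially. avg (\<lambda>k. x k - b k) n < \<delta> / 2"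
    by (auto dest: Limsup_lessD elim: eventually_mono)
  have ev_pos: "\<forall>\<^sub>F n in sequentially. 0 < sel_count Sel n"
    using count by (simp add: filterlim_at_top_dense)
  obtain n where n: "- \<delta> / 2 < avg (\<lambda>k. x k - a k) n" "avg (\<lambda>k. x k - b k) n < \<delta> / 2"
    "0 < sel_count Sel n"
    using eventually_happens[OF eventually_conj[OF ev_a eventually_conj[OF ev_b ev_pos]]] by auto
  have "(\<Sum>k<n. of_bool (Sel k) * (x k - a k))
      \<le> (\<Sum>k<n. of_bool (Sel k) * (x k - b k) - \<delta> * of_bool (Sel k))"
    by (rule sum_mono) (use gap(2) in force)
  also have "\<dots> = (\<Sum>k<n. of_bool (Sel k) * (x k - b k)) - \<delta> * sel_count Sel n"
    by (simp add: sum_subtractf sum_distrib_left sel_count_def)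
  finally have "avg (\<lambda>k. x k - a k) n \<le> avg (\<lambda>k. x k - b k) n - \<delta>"
    using n(3) unfolding avg_def by (simp add: field_simps)
  then show False
    using n(1,2) by linarith
qed

lemma frequently_less_of_liminf_less:
  fixes f :: "nat \<Rightarrow> real"
  assumes "liminf (\<lambda>n. ereal (f n)) < ereal t"
  shows "\<exists>\<^sub>F n in sequentially. f n < t"
  unfolding frequently_def
proof
  assume "\<forall>\<^sub>F n in sequentially. \<not> f n < t"
  then have "ereal t \<le> liminf (\<lambda>n. ereal (f n))"
    by (intro Liminf_bounded) (auto elim: eventually_mono)
  with assms show False by simp
qed

lemma frequently_greater_of_less_limsup:
  fixes f :: "nat \<Rightarrow> real"
  assumes "ereal t < limsup (\<lambda>n. ereal (f n))"
  shows "\<exists>\<^sub>F n in sequentially. t < f n"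
  unfolding frequently_def
proof
  assume "\<forall>\<^sub>F n in sequentially. \<not> t < f n"
  then have "limsup (\<lambda>n. ereal (f n)) \<le> ereal t"
    by (intro Limsup_bounded) (auto elim: eventually_mono)
  with assms show False by simp
qed

lemma lower_le_liminf_of_wCH_random:
  assumes precise: "precise \<phi>"
    and approx: "recursively_approximable (\<lambda>k. lower \<phi> (prefix \<omega> k))"
    and random: "wCH_random \<phi> \<omega>" and random_I: "wCH_random (\<lambda>_. I) \<omega>"
  shows "ereal (fst I) \<le> liminf (\<lambda>n. ereal (lower \<phi> (prefix \<omega> n)))"
proof (rule ccontr)
  define f where "f k = lower \<phi> (prefix \<omega> k)" for k
  assume "\<not> ?thesis"
  then have "liminf (\<lambda>n. ereal (f n)) < ereal (fst I)"
    by (simp add: f_def not_le)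
  then obtain t1 where t1: "liminf (\<lambda>n. ereal (f n)) < ereal t1" "t1 < fst I"
    using ereal_dense2 by (metis ereal_less_eq(3) order_less_le)
  define t2 where "t2 = (t1 + fst I) / 2"
  have "t1 < t2" "t2 < fst I"
    using t1(2) unfolding t2_def by simp_all
  obtain Sel where Sel: "recursive_temporal_selection Sel" "\<exists>\<^sub>F k in sequentially. Sel k"
    and below: "\<And>k. Sel k \<Longrightarrow> f k < t2"
    using recursively_approximable_frequently_below[OF approx[folded f_def] \<open>t1 < t2\<close>
          frequently_less_of_liminf_less[OF t1(1)]] by blast
  show False
  proof (rule no_selection_average_gap[of Sel "\<lambda>k. of_bool (\<omega> k)" "\<lambda>_. fst I" f "fst I - t2"])
    show "filterlim (sel_count Sel) at_top sequentially"
      using Sel(2) by (rule sel_count_at_top)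
    show "0 \<le> liminf (\<lambda>n. ereal ((\<Sum>k<n. of_bool (Sel k) * (of_bool (\<omega> k) - fst I)) / sel_count Sel n))"
      using wCH_random_frequent_selection(1)[OF random_I Sel] by (simp add: lower_def)
    show "limsup (\<lambda>n. ereal ((\<Sum>k<n. of_bool (Sel k) * (of_bool (\<omega> k) - f k)) / sel_count Sel n)) \<le> 0"
      using wCH_random_frequent_selection(2)[OF random Sel] precise
      unfolding f_def precise_def by simp
    show "f k + (fst I - t2) \<le> fst I" if "Sel k" for k
      using below[OF that] by simp
  qed (use \<open>t2 < fst I\<close> in simp)
qed

lemma limsup_le_upper_of_wCH_random:
  assumes approx: "recursively_approximable (\<lambda>k. lower \<phi> (prefix \<omega> k))"
    and random: "wCH_random \<phi> \<omega>" and random_I: "wCH_random (\<lambda>_. I) \<omega>"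
  shows "limsup (\<lambda>n. ereal (lower \<phi> (prefix \<omega> n))) \<le> ereal (snd I)"
proof (rule ccontr)
  define f where "f k = lower \<phi> (prefix \<omega> k)" for k
  assume "\<not> ?thesis"
  then have "ereal (snd I) < limsup (\<lambda>n. ereal (f n))"
    by (simp add: f_def not_le)
  then obtain t1 where t1: "ereal t1 < limsup (\<lambda>n. ereal (f n))" "snd I < t1"
    using ereal_dense2 by (metis ereal_less_eq(3) order_less_le)
  define t2 where "t2 = (snd I + t1) / 2"
  have "snd I < t2" "t2 < t1"
    using t1(2) unfolding t2_def by simp_all
  obtain Sel where Sel: "recursive_temporal_selection Sel" "\<exists>\<^sub>F k in sequentially. Sel k"
    and above: "\<And>k. Sel k \<Longrightarrow> t2 < f k"
    using recursively_approximable_frequently_above[OF approx[folded f_def] \<open>t2 < t1\<close>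
          frequently_greater_of_less_limsup[OF t1(1)]] by blast
  show False
  proof (rule no_selection_average_gap[of Sel "\<lambda>k. of_bool (\<omega> k)" f "\<lambda>_. snd I" "t2 - snd I"])
    show "filterlim (sel_count Sel) at_top sequentially"
      using Sel(2) by (rule sel_count_at_top)
    show "0 \<le> liminf (\<lambda>n. ereal ((\<Sum>k<n. of_bool (Sel k) * (of_bool (\<omega> k) - f k)) / sel_count Sel n))"
      using wCH_random_frequent_selection(1)[OF random Sel] unfolding f_def .
    show "limsup (\<lambda>n. ereal ((\<Sum>k<n. of_bool (Sel k) * (of_bool (\<omega> k) - snd I)) / sel_count Sel n)) \<le> 0"
      using wCH_random_frequent_selection(2)[OF random_I Sel] by (simp add: upper_def)
    show "snd I + (t2 - snd I) \<le> f k" if "Sel k" for k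
      using above[OF that] by simp
  qed (use \<open>snd I < t2\<close> in simp)
qed

theorem proposition17:
  fixes \<phi> :: "bool list \<Rightarrow> interval" and \<omega> :: "nat \<Rightarrow> bool"
  assumes "forecasting_system \<phi>" and "computable_fs \<phi>" and "precise \<phi>" and "temporal \<phi>"
    and "wCH_random \<phi> \<omega>"
  shows "{x::real. liminf (\<lambda>n. ereal (lower \<phi> (prefix \<omega> n))) \<le> ereal x \<and>
                   ereal x \<le> limsup (\<lambda>n. ereal (lower \<phi> (prefix \<omega> n)))} \<subseteq> I_wCH \<omega>"
proof
  fix x
  assume "x \<in> {x. liminf (\<lambda>n. ereal (lower \<phi> (prefix \<omega> n))) \<le> ereal x \<and>
                   ereal x \<le> limsup (\<lambda>n. ereal (lower \<phi> (prefix \<omega> n)))}"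
  then have x: "liminf (\<lambda>n. ereal (lower \<phi> (prefix \<omega> n))) \<le> ereal x"
    "ereal x \<le> limsup (\<lambda>n. ereal (lower \<phi> (prefix \<omega> n)))"
    by simp_all
  have approx: "recursively_approximable (\<lambda>k. lower \<phi> (prefix \<omega> k))"
    using assms(2,4) by (rule recursively_approximable_lower_along_path)
  show "x \<in> I_wCH \<omega>"
    unfolding I_wCH_def
  proof
    fix I
    assume "I \<in> I_wCH_family \<omega>"
    then have random_I: "wCH_random (\<lambda>_. I) \<omega>"
      by (simp add: I_wCH_family_def)
    have "ereal (fst I) \<le> ereal x"
      using lower_le_liminf_of_wCH_random[OF assms(3) approx assms(5) random_I] x(1)
      by (rule order_trans)
    moreover have "ereal x \<le> ereal (snd I)"
      using x(2) limsup_le_upper_of_wCH_random[OF approx assms(5) random_I]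
      by (rule order_trans)
    ultimately show "x \<in> {fst I..snd I}"
      by simp
  qed
qed

end
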